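(* Let $k\in\,]0,2]$, $M>0$, $\beta\in\,]0,\tfrac12[$, $0<\sigma_0\le\min\{1,\frac{3\beta^3}{4\pi M^2}\}$ and $I=\inf_{f\in\mathcal A}\mathcal D(f)$. Let $h\in\mathcal A$ with $\mathcal D(h)<0$ and let $\delta>0$ be such that $|\mathcal D(h)|\ge M+\delta$. Let $(R_n)$ be a sequence with $$R_n\ge\max\Big\{\frac{8M}{3},\frac{2M}{1-\frac{1}{(1+\frac{\delta}{6M})^2}}\Big\},\quad n\in\mathbb N.$$ Then there is no sequence $(f_n)\subset\mathcal A$ with $\lim_{n\to\infty}\mathcal D(f_n)=I$, $f_n\le1$ for all $n$, and $\lim_{n\to\infty}(\Delta M)_n\in\,]0,M[$, where $(\Delta M)_n=\int_{|x|\ge R_n}\int_{\mathbb R^3}\sqrt{1+|v|^2}f_n\,dx\,dv$.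
   Context: Let $\chi(s)=\frac{k}{k+1}s^{1+1/k}$. A measurable $f\ge0$ on $\mathbb R^3\times\mathbb R^3$ is spherically symmetric if $f(Ax,Av)=f(x,v)$ for all $A\in SO(3)$. For such $f$: $\rho_f(x)=\int\sqrt{1+|v|^2}f(x,v)\,dv$ (radial, written $\rho_f(r)$), $m_f(r)=\int_{|x|\le r}\int\sqrt{1+|v|^2}f\,dx\,dv$, $\lambda_f$ given by $e^{-2\lambda_f(r)}=1-2m_f(r)/r$, and $\mathcal D(f)=\int\int e^{\lambda_f(|x|)}(\chi(f)-f)\,dx\,dv$. $\mathcal A$ is the set of measurable spherically symmetric $f\ge0$ with $\int\int\sqrt{1+|v|^2}f\,dx\,dv=M$ and $\rho_f(r)\le\sigma_0$ for all $r\ge0$. *)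

theory Defs
  imports "HOL-Analysis.Analysis"
begin

definition chi :: "real \<Rightarrow> real \<Rightarrow> real" where
  "chi k s = k / (k + 1) * s powr (1 + 1 / k)"

definition sph_sym :: "(real^3 \<Rightarrow> real^3 \<Rightarrow> real) \<Rightarrow> bool" where
  "sph_sym f \<longleftrightarrow> (\<forall>A x v. rotation_matrix A \<longrightarrow> f (A *v x) (A *v v) = f x v)"

definition rho :: "(real^3 \<Rightarrow> real^3 \<Rightarrow> real) \<Rightarrow> real^3 \<Rightarrow> ennreal" where
  "rho f x = (\<integral>\<^sup>+ v. ennreal (sqrt (1 + (norm v)\<^sup>2) * f x v) \<partial>lebesgue)"

definition total_mass :: "(real^3 \<Rightarrow> real^3 \<Rightarrow> real) \<Rightarrow> ennreal" where
  "total_mass f = (\<integral>\<^sup>+ x. \<integral>\<^sup>+ v. ennreal (sqrt (1 + (norm v)\<^sup>2) * f x v) \<partial>lebesgue \<partial>lebesgue)"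

definition mass :: "(real^3 \<Rightarrow> real^3 \<Rightarrow> real) \<Rightarrow> real \<Rightarrow> real" where
  "mass f r = enn2real (\<integral>\<^sup>+ x. indicator {x. norm x \<le> r} x *
        (\<integral>\<^sup>+ v. ennreal (sqrt (1 + (norm v)\<^sup>2) * f x v) \<partial>lebesgue) \<partial>lebesgue)"

text \<open>e^{lambda_f(r)}, where e^{-2 lambda_f(r)} = 1 - 2 m_f(r)/r (value 1 at r = 0)\<close>
definition exp_lambda :: "(real^3 \<Rightarrow> real^3 \<Rightarrow> real) \<Rightarrow> real \<Rightarrow> real" where
  "exp_lambda f r = 1 / sqrt (1 - 2 * mass f r / r)"

definition Dfun :: "real \<Rightarrow> (real^3 \<Rightarrow> real^3 \<Rightarrow> real) \<Rightarrow> ereal" where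
  "Dfun k f =
     (let g = (\<lambda>x v. exp_lambda f (norm x) * (chi k (f x v) - f x v)) in
      enn2ereal (\<integral>\<^sup>+ x. \<integral>\<^sup>+ v. ennreal (max (g x v) 0) \<partial>lebesgue \<partial>lebesgue)
      - enn2ereal (\<integral>\<^sup>+ x. \<integral>\<^sup>+ v. ennreal (max (- g x v) 0) \<partial>lebesgue \<partial>lebesgue))"

definition admissible :: "real \<Rightarrow> real \<Rightarrow> (real^3 \<Rightarrow> real^3 \<Rightarrow> real) set" where
  "admissible M \<sigma>0 = {f.
     (\<lambda>p. f (fst p) (snd p)) \<in> borel_measurable (lebesgue :: ((real^3) \<times> (real^3)) measure)
     \<and> (\<forall>x v. 0 \<le> f x v)
     \<and> sph_sym f
     \<and> total_mass f = ennreal M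
     \<and> (\<forall>x. rho f x \<le> ennreal \<sigma>0)}"

definition outer_mass :: "(real^3 \<Rightarrow> real^3 \<Rightarrow> real) \<Rightarrow> real \<Rightarrow> ennreal" where
  "outer_mass f R = (\<integral>\<^sup>+ x. indicator {x. R \<le> norm x} x *
        (\<integral>\<^sup>+ v. ennreal (sqrt (1 + (norm v)\<^sup>2) * f x v) \<partial>lebesgue) \<partial>lebesgue)"

end

theory Submission
  imports Defs
begin

(* For densities bounded by 1 one has chi(f) <= f, so D(f) = -N(f) with
   N(f) = int int e^lambda_f (f - chi(f)) >= 0.  The admissible bound rho <= sigma_0 gives
   2 m_f(r)/r <= 2 beta, so e^lambda_f <= 1/sqrt(1 - 2 beta) and I = -J is finite, while h
   forces J >= M + delta.  Split a minimizing f_n at the radius R_n: outside R_n the factor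
   e^lambda is at most c = 1 + delta/(6M), so that region contributes at most c (Delta M)_n
   to N(f_n).  The inner part, of mass M - (Delta M)_n, dilated in x by s with
   s^3 = (M - (Delta M)_n)/M, becomes admissible of mass M; dilation can only increase
   e^lambda, hence the inner part contributes at most s^3 J.  In the limit
   J <= J (M - L)/M + c L, i.e. J <= c M < M + delta, a contradiction. *)

section \<open>Lebesgue measure on products and under dilations\<close>

lemma lebesgue_measurable_fst [measurable]:
  "(fst :: 'a::euclidean_space \<times> 'b::euclidean_space \<Rightarrow> 'a) \<in> lebesgue \<rightarrow>\<^sub>M borel"
  by (intro measurable_completion) (simp add: borel_measurable_continuous_onI continuous_on_fst)

lemma lebesgue_measurable_snd [measurable]:
  "(snd :: 'a::euclidean_space \<times> 'b::euclidean_space \<Rightarrow> 'b) \<in> lebesgue \<rightarrow>\<^sub>M borel"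
  by (intro measurable_completion) (simp add: borel_measurable_continuous_onI continuous_on_snd)

lemma lebesgue_measurable_id [measurable]:
  "(\<lambda>x::'a::euclidean_space. x) \<in> borel_measurable lebesgue"
  by (rule measurable_completion) simp

lemma borel_measurable_completion_AE:
  fixes f g :: "'a \<Rightarrow> 'b::topological_space"
  assumes g: "g \<in> borel_measurable M" and ae: "AE x in M. f x = g x"
  shows "f \<in> borel_measurable (completion M)"
proof -
  obtain N where N: "N \<in> null_sets M" "{x\<in>space M. f x \<noteq> g x} \<subseteq> N"
    using ae unfolding eventually_ae_filter by auto
  show ?thesis
  proof (rule measurableI)
    fix A :: "'b set" assume A: "A \<in> sets borel"
    have eq: "f -` A \<inter> space (completion M) =
        ((g -` A \<inter> space M) - N) \<union> ((f -` A \<inter> space M) \<inter> N)"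
      using N by auto
    have "(g -` A \<inter> space M) - N \<in> sets (completion M)"
      using g A N by (auto simp: measurable_sets)
    moreover have "(f -` A \<inter> space M) \<inter> N \<in> null_sets (completion M)"
      by (rule null_sets_completion_subset[of _ N]) (use N in \<open>auto intro: null_sets_completionI\<close>)
    ultimately show "f -` A \<inter> space (completion M) \<in> sets (completion M)"
      unfolding eq by auto
  qed simp
qed

lemma lebesgue_nn_integral_fst:
  fixes F :: "'a::euclidean_space \<times> 'b::euclidean_space \<Rightarrow> ennreal"
  assumes F: "F \<in> borel_measurable lebesgue"
  shows "(\<lambda>x. \<integral>\<^sup>+y. F (x, y) \<partial>lebesgue) \<in> borel_measurable lebesgue"
    and "(\<integral>\<^sup>+x. \<integral>\<^sup>+y. F (x, y) \<partial>lebesgue \<partial>lebesgue) = (\<integral>\<^sup>+p. F p \<partial>lebesgue)"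
proof -
  have PS: "pair_sigma_finite (lborel :: 'a measure) (lborel :: 'b measure)"
    by (simp add: lborel.sigma_finite_measure_axioms pair_sigma_finite.intro)
  obtain G where G: "G \<in> borel_measurable (lborel :: ('a \<times> 'b) measure)"
    and ae: "AE p in lborel. F p = G p"
    using completion_ex_borel_measurable[OF F] by blast
  have G2: "G \<in> borel_measurable (lborel \<Otimes>\<^sub>M lborel)"
    using G by (simp add: lborel_prod)
  have "AE p in lborel \<Otimes>\<^sub>M lborel. F p = G p"
    by (subst lborel_prod) (rule ae)
  then have ae_pair: "AE x in lborel. AE y in lborel. F (x, y) = G (x, y)"
    by (rule pair_sigma_finite.AE_pair[OF PS])
  define H where "H x = (\<integral>\<^sup>+y. G (x, y) \<partial>lborel)" for x
  have H: "H \<in> borel_measurable lborel"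
    unfolding H_def using lborel.borel_measurable_nn_integral_fst[OF G2] .
  have ae_H: "AE x in lborel. (\<integral>\<^sup>+y. F (x, y) \<partial>lebesgue) = H x"
    using ae_pair by eventually_elim (simp add: nn_integral_completion H_def nn_integral_cong_AE)
  show "(\<lambda>x. \<integral>\<^sup>+y. F (x, y) \<partial>lebesgue) \<in> borel_measurable lebesgue"
    by (rule borel_measurable_completion_AE[OF H ae_H])
  have "(\<integral>\<^sup>+x. \<integral>\<^sup>+y. F (x, y) \<partial>lebesgue \<partial>lebesgue) = (\<integral>\<^sup>+x. H x \<partial>lborel)"
    by (subst nn_integral_completion) (rule nn_integral_cong_AE[OF ae_H])
  also have "\<dots> = integral\<^sup>N (lborel \<Otimes>\<^sub>M lborel) G"
    unfolding H_def by (rule lborel.nn_integral_fst[OF G2])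
  also have "\<dots> = integral\<^sup>N lborel F"
    using ae by (simp add: lborel_prod nn_integral_cong_AE)
  finally show "(\<integral>\<^sup>+x. \<integral>\<^sup>+y. F (x, y) \<partial>lebesgue \<partial>lebesgue) = (\<integral>\<^sup>+p. F p \<partial>lebesgue)"
    by (simp add: nn_integral_completion)
qed

lemma lebesgue_iterated_nn_integral_linear:
  fixes F G :: "'a::euclidean_space \<times> 'b::euclidean_space \<Rightarrow> ennreal"
  assumes [measurable]: "F \<in> borel_measurable lebesgue" "G \<in> borel_measurable lebesgue"
  shows "(\<integral>\<^sup>+x. \<integral>\<^sup>+y. a * F (x, y) + G (x, y) \<partial>lebesgue \<partial>lebesgue) =
    a * (\<integral>\<^sup>+x. \<integral>\<^sup>+y. F (x, y) \<partial>lebesgue \<partial>lebesgue) + (\<integral>\<^sup>+x. \<integral>\<^sup>+y. G (x, y) \<partial>lebesgue \<partial>lebesgue)"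
proof -
  have "(\<lambda>p. a * F p + G p) \<in> borel_measurable lebesgue"
    by measurable
  from lebesgue_nn_integral_fst(2)[OF this] show ?thesis
    by (simp add: lebesgue_nn_integral_fst(2) nn_integral_linear)
qed

lemma nn_integral_indicator_cmult:
  "(\<integral>\<^sup>+y. indicator A x * g y \<partial>N) = indicator A x * (\<integral>\<^sup>+y. g y \<partial>N)"
  by (cases "x \<in> A") simp_all

lemma nn_integral_lebesgue_scaleR:
  fixes \<phi> :: "'a::euclidean_space \<Rightarrow> ennreal"
  assumes \<phi>[measurable]: "\<phi> \<in> borel_measurable lebesgue" and s: "0 < s"
  shows "(\<integral>\<^sup>+x. \<phi> (s *\<^sub>R x) \<partial>lebesgue) = ennreal (1 / s ^ DIM('a)) * (\<integral>\<^sup>+x. \<phi> x \<partial>lebesgue)"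
proof -
  have scale: "(lebesgue :: 'a measure) =
      density (distr lebesgue lebesgue (\<lambda>x. s *\<^sub>R x)) (\<lambda>_. ennreal (s ^ DIM('a)))"
    using lebesgue_affine_euclidean[where c="\<lambda>_::'a. s" and t=0] s
    unfolding scaleR_scaleR[symmetric] scaleR_sum_right[symmetric] euclidean_representation
      prod_constant
    by simp
  have "(\<integral>\<^sup>+x. \<phi> x \<partial>lebesgue) =
      (\<integral>\<^sup>+x. ennreal (s ^ DIM('a)) * \<phi> x \<partial>distr lebesgue lebesgue (\<lambda>x. s *\<^sub>R x))"
    by (subst arg_cong[where f="\<lambda>N. integral\<^sup>N N \<phi>", OF scale], subst nn_integral_density) auto
  also have "\<dots> = ennreal (s ^ DIM('a)) * (\<integral>\<^sup>+x. \<phi> x \<partial>distr lebesgue lebesgue (\<lambda>x. s *\<^sub>R x))"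
    by (rule nn_integral_cmult) simp
  also have "\<dots> = ennreal (s ^ DIM('a)) * (\<integral>\<^sup>+x. \<phi> (s *\<^sub>R x) \<partial>lebesgue)"
    by (subst nn_integral_distr) auto
  finally have "(\<integral>\<^sup>+x. \<phi> x \<partial>lebesgue) = ennreal (s ^ DIM('a)) * (\<integral>\<^sup>+x. \<phi> (s *\<^sub>R x) \<partial>lebesgue)" .
  moreover have "ennreal (1 / s ^ DIM('a)) * ennreal (s ^ DIM('a)) = 1"
    using s by (simp add: ennreal_mult[symmetric])
  ultimately show ?thesis
    by (simp add: mult.assoc[symmetric])
qed

lemma lebesgue_measurable_scaleR_fst:
  assumes s: "s \<noteq> (0::real)"
  shows "(\<lambda>p::'a::euclidean_space \<times> 'b::euclidean_space. (s *\<^sub>R fst p, snd p)) \<in> lebesgue \<rightarrow>\<^sub>M lebesgue"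
proof -
  define c where "c j = (if fst j = 0 then 1 else s)" for j :: "'a \<times> 'b"
  have "(\<lambda>p. 0 + (\<Sum>j\<in>Basis. (c j * (p \<bullet> j)) *\<^sub>R j)) = (\<lambda>p::'a \<times> 'b. (s *\<^sub>R fst p, snd p))"
  proof
    fix p :: "'a \<times> 'b"
    show "0 + (\<Sum>j\<in>Basis. (c j * (p \<bullet> j)) *\<^sub>R j) = (s *\<^sub>R fst p, snd p)"
    proof (rule euclidean_eqI)
      fix b :: "'a \<times> 'b" assume b: "b \<in> Basis"
      then have "(0 + (\<Sum>j\<in>Basis. (c j * (p \<bullet> j)) *\<^sub>R j)) \<bullet> b = c b * (p \<bullet> b)"
        by simp
      also have "\<dots> = (s *\<^sub>R fst p, snd p) \<bullet> b"
        using b by (auto simp: c_def Basis_prod_def inner_prod_def)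
      finally show "(0 + (\<Sum>j\<in>Basis. (c j * (p \<bullet> j)) *\<^sub>R j)) \<bullet> b = (s *\<^sub>R fst p, snd p) \<bullet> b" .
    qed
  qed
  moreover have "\<And>j. j \<in> Basis \<Longrightarrow> c j \<noteq> 0"
    using s by (auto simp: c_def)
  ultimately show ?thesis
    using lebesgue_affine_measurable[of c 0] by metis
qed

section \<open>Mass and the metric factor\<close>

lemma chi_nonneg: "0 \<le> s \<Longrightarrow> 0 < k \<Longrightarrow> 0 \<le> chi k s"
  by (simp add: chi_def)

lemma chi_le_self:
  assumes "0 \<le> s" "s \<le> 1" "0 < k"
  shows "chi k s \<le> s"
proof -
  have "s powr (1 + 1 / k) = s * s powr (1 / k)"
    using assms by (cases "s = 0") (simp_all add: powr_add)
  also have "\<dots> \<le> s"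
    using assms powr_mono2[of "1 / k" s 1] mult_left_le[of "s powr (1 / k)" s] by simp
  finally have "s powr (1 + 1 / k) \<le> s" .
  moreover have "k / (k + 1) \<le> 1"
    using assms by simp
  ultimately have "k / (k + 1) * s powr (1 + 1 / k) \<le> 1 * s"
    using assms by (intro mult_mono) auto
  then show ?thesis
    by (simp add: chi_def)
qed

lemma inverse_sqrt_one_minus_mono:
  fixes t u :: real
  assumes "t \<le> u" "u < 1"
  shows "1 / sqrt (1 - t) \<le> 1 / sqrt (1 - u)"
  using assms by (intro divide_left_mono mult_pos_pos) auto

lemma mass_nonneg: "0 \<le> mass f r"
  by (simp add: mass_def)

lemma total_mass_eq_nn_integral_rho: "total_mass f = (\<integral>\<^sup>+ x. rho f x \<partial>lebesgue)"
  by (simp add: total_mass_def rho_def)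

lemma mass_eq_nn_integral_rho:
  "mass f r = enn2real (\<integral>\<^sup>+ x. indicator {x. norm x \<le> r} x * rho f x \<partial>lebesgue)"
  by (simp add: mass_def rho_def)

lemma one_le_exp_lambda:
  assumes "0 \<le> r" "2 * mass f r / r < 1"
  shows "1 \<le> exp_lambda f r"
proof -
  have "0 \<le> 2 * mass f r / r"
    using assms(1) by (simp add: mass_nonneg)
  from inverse_sqrt_one_minus_mono[OF this assms(2)] show ?thesis
    by (simp add: exp_lambda_def)
qed

lemma exp_lambda_le:
  assumes "0 < c" "2 * mass f r / r \<le> 1 - 1 / c\<^sup>2"
  shows "exp_lambda f r \<le> c"
proof -
  have "exp_lambda f r \<le> 1 / sqrt (1 - (1 - 1 / c\<^sup>2))"
    unfolding exp_lambda_def using assms by (intro inverse_sqrt_one_minus_mono) auto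
  also have "\<dots> = c"
    using assms(1) by (simp add: real_sqrt_divide)
  finally show ?thesis .
qed

lemma mass_le_total_mass:
  assumes "total_mass f = ennreal M" "0 \<le> M"
  shows "mass f r \<le> M"
proof -
  have "(\<integral>\<^sup>+ x. indicator {x. norm x \<le> r} x * rho f x \<partial>lebesgue) \<le> total_mass f"
    unfolding total_mass_eq_nn_integral_rho by (intro nn_integral_mono) (simp add: indicator_def)
  then show ?thesis
    using assms enn2real_mono[of _ "ennreal M"] by (simp add: mass_eq_nn_integral_rho)
qed

lemma mass_mono:
  assumes "total_mass f < \<infinity>"
  shows "mono (mass f)"
proof
  fix r1 r2 :: real assume "r1 \<le> r2"
  let ?m = "\<lambda>r. \<integral>\<^sup>+ x. indicator {x. norm x \<le> r} x * rho f x \<partial>lebesgue"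
  have "?m r1 \<le> ?m r2"
    using \<open>r1 \<le> r2\<close> by (intro nn_integral_mono) (simp add: indicator_def)
  moreover have "?m r2 \<le> total_mass f"
    unfolding total_mass_eq_nn_integral_rho by (intro nn_integral_mono) (simp add: indicator_def)
  ultimately show "mass f r1 \<le> mass f r2"
    unfolding mass_eq_nn_integral_rho using assms by (intro enn2real_mono) auto
qed

lemma borel_measurable_exp_lambda:
  assumes "total_mass f < \<infinity>"
  shows "exp_lambda f \<in> borel_measurable borel"
proof -
  have [measurable]: "mass f \<in> borel_measurable borel"
    using borel_measurable_mono[OF mass_mono[OF assms]] .
  show ?thesis
    unfolding exp_lambda_def[abs_def] by measurable
qed

lemma unit_ball_vol_3: "unit_ball_vol 3 = 4 / 3 * pi"
  using unit_ball_vol_numeral(2)[of "Num.One"] by (simp add: fact_numeral)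

lemma mass_le_ball_volume:
  assumes rho: "\<And>x. rho f x \<le> ennreal \<sigma>0" and "0 \<le> \<sigma>0" "0 \<le> r"
  shows "mass f r \<le> \<sigma>0 * (4 / 3 * pi * r ^ 3)"
proof -
  have "(\<integral>\<^sup>+ x. indicator {x. norm x \<le> r} x * rho f x \<partial>lebesgue) \<le>
      (\<integral>\<^sup>+ x. ennreal \<sigma>0 * indicator (cball (0::real^3) r) x \<partial>lebesgue)"
    using rho by (intro nn_integral_mono) (auto simp: indicator_def dist_norm)
  also have "\<dots> = ennreal \<sigma>0 * emeasure lborel (cball (0::real^3) r)"
    by (simp add: nn_integral_cmult_indicator)
  also have "\<dots> = ennreal \<sigma>0 * ennreal (4 / 3 * pi * r ^ 3)"
    using assms by (simp add: emeasure_cball unit_ball_vol_3)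
  also have "\<dots> = ennreal (\<sigma>0 * (4 / 3 * pi * r ^ 3))"
    by (rule ennreal_mult[symmetric]) (use assms in auto)
  finally show ?thesis
    using assms enn2real_mono[of _ "ennreal (\<sigma>0 * (4 / 3 * pi * r ^ 3))"]
    by (simp add: mass_eq_nn_integral_rho)
qed

lemma ratio_le_of_mass_bounds:
  fixes m r M \<beta> \<sigma>0 :: real
  assumes m: "m \<le> M" "m \<le> \<sigma>0 * (4 / 3 * pi * r ^ 3)" and pos: "0 < r" "0 < M" "0 < \<beta>" "0 \<le> \<sigma>0"
    and \<sigma>0: "\<sigma>0 \<le> 3 * \<beta>^3 / (4 * pi * M\<^sup>2)"
  shows "m / r \<le> \<beta>"
proof (cases "M \<le> \<beta> * r")
  case True
  then show ?thesis
    using m pos by (simp add: divide_le_eq mult.commute)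
next
  case False
  then have "r < M / \<beta>"
    using pos by (simp add: less_divide_eq mult.commute)
  have "\<sigma>0 * (4 / 3 * pi * r ^ 3) \<le> 3 * \<beta>^3 / (4 * pi * M\<^sup>2) * (4 / 3 * pi * r ^ 3)"
    using \<sigma>0 pos by (intro mult_right_mono) auto
  with m have "m \<le> 3 * \<beta>^3 / (4 * pi * M\<^sup>2) * (4 / 3 * pi * r ^ 3)"
    by linarith
  also have "\<dots> = \<beta>^3 * r^3 / M\<^sup>2"
    using pos by (simp add: field_simps)
  finally have "m / r \<le> \<beta>^3 * r^2 / M\<^sup>2"
    using pos by (simp add: divide_le_eq power3_eq_cube power2_eq_square field_simps)
  also have "\<dots> \<le> \<beta>^3 * (M / \<beta>)^2 / M\<^sup>2"
    using \<open>r < M / \<beta>\<close> pos by (intro divide_right_mono mult_left_mono power_mono) auto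
  also have "\<dots> = \<beta>"
    using pos by (simp add: field_simps power2_eq_square power3_eq_cube)
  finally show ?thesis .
qed

lemma mass_div_radius_le:
  assumes rho: "\<And>x. rho f x \<le> ennreal \<sigma>0" and tm: "total_mass f = ennreal M"
    and M: "0 < M" and \<beta>: "0 < \<beta>" and \<sigma>0: "0 \<le> \<sigma>0" "\<sigma>0 \<le> 3 * \<beta>^3 / (4 * pi * M\<^sup>2)"
    and r: "0 \<le> r"
  shows "mass f r / r \<le> \<beta>"
proof (cases "r = 0")
  case False
  then show ?thesis
    using ratio_le_of_mass_bounds[OF mass_le_total_mass[OF tm] mass_le_ball_volume[OF rho \<sigma>0(1) r]]
      M \<beta> \<sigma>0 r by simp
qed (use \<beta> in simp)

section \<open>Cutting off and dilating densities\<close>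

definition cutoff :: "real \<Rightarrow> (real^3 \<Rightarrow> real^3 \<Rightarrow> real) \<Rightarrow> real^3 \<Rightarrow> real^3 \<Rightarrow> real" where
  "cutoff R f x v = (if norm x < R then f x v else 0)"

definition dilate :: "real \<Rightarrow> (real^3 \<Rightarrow> real^3 \<Rightarrow> real) \<Rightarrow> real^3 \<Rightarrow> real^3 \<Rightarrow> real" where
  "dilate s f x v = f (s *\<^sub>R x) v"

lemma norm_rotation_matrix_mult:
  assumes "rotation_matrix A"
  shows "norm (A *v x) = norm (x::real^'n)"
proof -
  have "orthogonal_transformation (\<lambda>x::real^'n. A *v x)"
    using assms orthogonal_transformation_matrix[of "\<lambda>x::real^'n. A *v x"]
    by (simp add: rotation_matrix_def)
  then show ?thesis
    using orthogonal_transformation_norm by blast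
qed

lemma sph_sym_cutoff: "sph_sym f \<Longrightarrow> sph_sym (cutoff R f)"
  unfolding sph_sym_def cutoff_def by (simp add: norm_rotation_matrix_mult)

lemma sph_sym_dilate: "sph_sym f \<Longrightarrow> sph_sym (dilate s f)"
  unfolding sph_sym_def dilate_def by (metis matrix_vector_mult_scaleR)

lemma measurable_cutoff:
  assumes [measurable]: "(\<lambda>p. f (fst p) (snd p)) \<in> borel_measurable lebesgue"
  shows "(\<lambda>p. cutoff R f (fst p) (snd p)) \<in> borel_measurable lebesgue"
  unfolding cutoff_def by measurable

lemma measurable_dilate:
  assumes f: "(\<lambda>p. f (fst p) (snd p)) \<in> borel_measurable lebesgue" and s: "s \<noteq> 0"
  shows "(\<lambda>p. dilate s f (fst p) (snd p)) \<in> borel_measurable lebesgue"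
  using measurable_comp[OF lebesgue_measurable_scaleR_fst[OF s] f] by (simp add: dilate_def o_def)

lemma rho_cutoff: "rho (cutoff R f) x = indicator {x. norm x < R} x * rho f x"
  unfolding rho_def cutoff_def by (cases "norm x < R") auto

lemma rho_dilate: "rho (dilate s f) x = rho f (s *\<^sub>R x)"
  by (simp add: rho_def dilate_def)

lemma borel_measurable_rho:
  assumes "(\<lambda>p. f (fst p) (snd p)) \<in> borel_measurable lebesgue"
  shows "rho f \<in> borel_measurable lebesgue"
proof -
  have "(\<lambda>p. ennreal (sqrt (1 + (norm (snd p))\<^sup>2) * f (fst p) (snd p))) \<in> borel_measurable lebesgue"
    using assms by measurable
  from lebesgue_nn_integral_fst(1)[OF this] show ?thesis
    by (simp add: rho_def[abs_def])
qed

lemma mass_cutoff: "r < R \<Longrightarrow> mass (cutoff R f) r = mass f r"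
  unfolding mass_eq_nn_integral_rho rho_cutoff
  by (intro arg_cong[where f=enn2real] nn_integral_cong) (auto simp: indicator_def)

lemma exp_lambda_cutoff: "r < R \<Longrightarrow> exp_lambda (cutoff R f) r = exp_lambda f r"
  by (simp add: exp_lambda_def mass_cutoff)

lemma total_mass_dilate:
  assumes "(\<lambda>p. f (fst p) (snd p)) \<in> borel_measurable lebesgue" "0 < s"
  shows "total_mass (dilate s f) = ennreal (1 / s ^ 3) * total_mass f"
  unfolding total_mass_eq_nn_integral_rho rho_dilate
  using nn_integral_lebesgue_scaleR[OF borel_measurable_rho[OF assms(1)] assms(2)] by simp

lemma mass_dilate:
  assumes f: "(\<lambda>p. f (fst p) (snd p)) \<in> borel_measurable lebesgue" and s: "0 < s"
  shows "mass (dilate s f) r = mass f (s * r) / s ^ 3"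
proof -
  note [measurable] = borel_measurable_rho[OF f]
  define \<phi> where "\<phi> y = indicator {y. norm y \<le> s * r} y * rho f y" for y :: "real^3"
  have \<phi>: "\<phi> \<in> borel_measurable lebesgue"
    unfolding \<phi>_def by measurable
  have "(\<integral>\<^sup>+ x. \<phi> (s *\<^sub>R x) \<partial>lebesgue) = ennreal (1 / s ^ 3) * (\<integral>\<^sup>+ x. \<phi> x \<partial>lebesgue)"
    using nn_integral_lebesgue_scaleR[OF \<phi> s] by simp
  moreover have "(\<integral>\<^sup>+ x. indicator {x. norm x \<le> r} x * rho (dilate s f) x \<partial>lebesgue) =
      (\<integral>\<^sup>+ x. \<phi> (s *\<^sub>R x) \<partial>lebesgue)"
    using s by (intro nn_integral_cong) (simp add: \<phi>_def rho_dilate indicator_def)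
  ultimately show ?thesis
    using s unfolding mass_eq_nn_integral_rho \<phi>_def by (simp add: enn2real_mult)
qed

lemma total_mass_split_cutoff:
  assumes [measurable]: "(\<lambda>p. f (fst p) (snd p)) \<in> borel_measurable lebesgue"
  shows "total_mass f = total_mass (cutoff R f) + outer_mass f R"
proof -
  let ?w = "\<lambda>x v. ennreal (sqrt (1 + (norm v)\<^sup>2) * f x v)"
  have [measurable]:
    "(\<lambda>p. indicator {x. norm x < R} (fst p) * ?w (fst p) (snd p)) \<in> borel_measurable lebesgue"
    "(\<lambda>p. indicator {x. R \<le> norm x} (fst p) * ?w (fst p) (snd p)) \<in> borel_measurable lebesgue"
    by measurable
  have "total_mass f = (\<integral>\<^sup>+x. \<integral>\<^sup>+v. 1 * (indicator {x. norm x < R} x * ?w x v)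
      + indicator {x. R \<le> norm x} x * ?w x v \<partial>lebesgue \<partial>lebesgue)"
    unfolding total_mass_def by (intro nn_integral_cong) (auto simp: indicator_def)
  also have "\<dots> = total_mass (cutoff R f) + outer_mass f R"
    using lebesgue_iterated_nn_integral_linear[where a=1,
        of "\<lambda>p. indicator {x. norm x < R} (fst p) * ?w (fst p) (snd p)"
        "\<lambda>p. indicator {x. R \<le> norm x} (fst p) * ?w (fst p) (snd p)"]
    unfolding total_mass_def outer_mass_def cutoff_def
    by (auto simp: indicator_def intro!: arg_cong2[where f="(+)"] nn_integral_cong)
  finally show ?thesis .
qed

lemma outer_mass_le_total_mass: "outer_mass f R \<le> total_mass f"
  unfolding outer_mass_def total_mass_def by (intro nn_integral_mono) (auto simp: indicator_def)

lemma dilate_admissible: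
  assumes f: "(\<lambda>p. f (fst p) (snd p)) \<in> borel_measurable lebesgue" "\<And>x v. 0 \<le> f x v" "sph_sym f"
    and rho: "\<And>x. rho f x \<le> ennreal \<sigma>0" and tm: "total_mass f = ennreal (s ^ 3 * M)" and s: "0 < s"
  shows "dilate s f \<in> admissible M \<sigma>0"
proof -
  have "total_mass (dilate s f) = ennreal (1 / s ^ 3) * ennreal (s ^ 3 * M)"
    using total_mass_dilate[OF f(1) s] tm by simp
  also have "\<dots> = ennreal M"
    by (subst ennreal_mult'[symmetric]) (use s in auto)
  finally show ?thesis
    using measurable_dilate[OF f(1)] s f sph_sym_dilate rho
    by (auto simp: admissible_def rho_dilate dilate_def)
qed

lemma exp_lambda_le_dilate:
  assumes f: "(\<lambda>p. f (fst p) (snd p)) \<in> borel_measurable lebesgue"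
    and s: "0 < s" "s \<le> 1" and r: "0 \<le> r" and ratio: "2 * mass (dilate s f) r / r < 1"
  shows "exp_lambda f (s * r) \<le> exp_lambda (dilate s f) r"
proof -
  define m where "m = mass f (s * r)"
  have "s ^ 3 \<le> s"
    using s by (simp add: power3_eq_cube mult_le_one)
  then have "m / s \<le> m / s ^ 3"
    using s by (intro divide_left_mono) (auto simp: m_def mass_nonneg)
  then have "2 * (m / s) / r \<le> 2 * (m / s ^ 3) / r"
    using r by (intro divide_right_mono mult_left_mono) auto
  moreover have "2 * m / (s * r) = 2 * (m / s) / r"
    by simp
  moreover have "mass (dilate s f) r = m / s ^ 3"
    using mass_dilate[OF f s(1)] by (simp add: m_def)
  ultimately show ?thesis
    using ratio inverse_sqrt_one_minus_mono by (simp add: exp_lambda_def m_def)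
qed

section \<open>The negative part of the functional\<close>

definition D_neg_density :: "real \<Rightarrow> (real^3 \<Rightarrow> real^3 \<Rightarrow> real) \<Rightarrow> real^3 \<Rightarrow> real^3 \<Rightarrow> ennreal" where
  "D_neg_density k f x v = ennreal (max (- (exp_lambda f (norm x) * (chi k (f x v) - f x v))) 0)"

definition D_neg :: "real \<Rightarrow> (real^3 \<Rightarrow> real^3 \<Rightarrow> real) \<Rightarrow> ennreal" where
  "D_neg k f = (\<integral>\<^sup>+ x. \<integral>\<^sup>+ v. D_neg_density k f x v \<partial>lebesgue \<partial>lebesgue)"

lemma uminus_D_neg_le_Dfun: "- enn2ereal (D_neg k f) \<le> Dfun k f"
proof -
  have "- b \<le> a - b" if "0 \<le> a" for a b :: ereal
    using that by (cases a; cases b) auto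
  then show ?thesis
    by (simp add: Dfun_def D_neg_def D_neg_density_def)
qed

lemma Dfun_eq_uminus_D_neg:
  assumes "\<And>x v. 0 \<le> f x v" "\<And>x v. f x v \<le> 1" "\<And>r. 0 \<le> r \<Longrightarrow> 0 \<le> exp_lambda f r" "0 < k"
  shows "Dfun k f = - enn2ereal (D_neg k f)"
proof -
  have "max (exp_lambda f (norm x) * (chi k (f x v) - f x v)) 0 = 0" for x v
    using chi_le_self[of "f x v" k] assms mult_nonneg_nonpos[of "exp_lambda f (norm x)"]
    by (simp add: max_def)
  then show ?thesis
    by (simp add: Dfun_def D_neg_def D_neg_density_def zero_ennreal.rep_eq)
qed

lemma D_neg_density_le:
  assumes "0 \<le> f x v" "0 < k" "0 \<le> exp_lambda f (norm x)" "exp_lambda f (norm x) \<le> E"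
  shows "D_neg_density k f x v \<le> ennreal (E * (sqrt (1 + (norm v)\<^sup>2) * f x v))"
proof -
  have "- (exp_lambda f (norm x) * (chi k (f x v) - f x v)) \<le> exp_lambda f (norm x) * f x v"
    using assms chi_nonneg[of "f x v" k] by (simp add: algebra_simps)
  also have "\<dots> \<le> E * f x v"
    using assms by (intro mult_right_mono) auto
  also have "\<dots> \<le> E * (sqrt (1 + (norm v)\<^sup>2) * f x v)"
    using assms mult_right_mono[of 1 "sqrt (1 + (norm v)\<^sup>2)" "f x v"]
    by (intro mult_left_mono) auto
  finally show ?thesis
    using assms unfolding D_neg_density_def by (intro ennreal_leI) auto
qed

lemma borel_measurable_D_neg_density:
  assumes [measurable]: "(\<lambda>p. f (fst p) (snd p)) \<in> borel_measurable lebesgue"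
    "exp_lambda f \<in> borel_measurable borel"
  shows "(\<lambda>p. D_neg_density k f (fst p) (snd p)) \<in> borel_measurable lebesgue"
  unfolding D_neg_density_def chi_def by measurable

lemma D_neg_density_cutoff:
  "D_neg_density k (cutoff R f) x v = indicator {x. norm x < R} x * D_neg_density k f x v"
  by (cases "norm x < R") (auto simp: D_neg_density_def cutoff_def exp_lambda_cutoff chi_def)

lemma D_neg_le_total_mass:
  assumes f: "(\<lambda>p. f (fst p) (snd p)) \<in> borel_measurable lebesgue" "\<And>x v. 0 \<le> f x v" and k: "0 < k"
    and E: "\<And>r. 0 \<le> r \<Longrightarrow> 0 \<le> exp_lambda f r \<and> exp_lambda f r \<le> E"
  shows "D_neg k f \<le> ennreal E * total_mass f"
proof -
  let ?w = "\<lambda>x v. ennreal (sqrt (1 + (norm v)\<^sup>2) * f x v)"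
  have [measurable]: "(\<lambda>p. ?w (fst p) (snd p)) \<in> borel_measurable lebesgue"
    using f(1) by measurable
  have "0 \<le> E"
    using E[of 0] by simp
  have "D_neg_density k f x v \<le> ennreal E * ?w x v + 0" for x v
    using D_neg_density_le[of f x v k E] f(2)[of x v] k E[of "norm x"] \<open>0 \<le> E\<close>
    by (simp add: ennreal_mult)
  then have "D_neg k f \<le> (\<integral>\<^sup>+ x. \<integral>\<^sup>+ v. ennreal E * ?w x v + 0 \<partial>lebesgue \<partial>lebesgue)"
    unfolding D_neg_def by (intro nn_integral_mono)
  also have "\<dots> = ennreal E * total_mass f"
    using lebesgue_iterated_nn_integral_linear[of "\<lambda>p. ?w (fst p) (snd p)" "\<lambda>_. 0" "ennreal E"]
    by (simp add: total_mass_def)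
  finally show ?thesis .
qed

lemma D_neg_le_cutoff:
  assumes f: "(\<lambda>p. f (fst p) (snd p)) \<in> borel_measurable lebesgue" "\<And>x v. 0 \<le> f x v" and k: "0 < k"
    and e: "exp_lambda f \<in> borel_measurable borel"
    and c: "\<And>r. R \<le> r \<Longrightarrow> 0 \<le> exp_lambda f r \<and> exp_lambda f r \<le> c"
  shows "D_neg k f \<le> D_neg k (cutoff R f) + ennreal c * outer_mass f R"
proof -
  let ?w = "\<lambda>x v. indicator {x. R \<le> norm x} x * ennreal (sqrt (1 + (norm v)\<^sup>2) * f x v)"
  let ?d = "\<lambda>x v. indicator {x. norm x < R} x * D_neg_density k f x v"
  have [measurable]: "(\<lambda>p. ?w (fst p) (snd p)) \<in> borel_measurable lebesgue"
    using f(1) by measurable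
  have [measurable]: "(\<lambda>p. ?d (fst p) (snd p)) \<in> borel_measurable lebesgue"
    using borel_measurable_D_neg_density[OF f(1) e] by measurable
  have "D_neg_density k f x v \<le> ennreal c * ?w x v + ?d x v" for x v
  proof (cases "R \<le> norm x")
    case True
    then have "D_neg_density k f x v \<le> ennreal (c * (sqrt (1 + (norm v)\<^sup>2) * f x v))"
      using D_neg_density_le[of f x v k c] f(2)[of x v] k c[OF True] by blast
    then show ?thesis
      using True c[OF True] f(2)[of x v] by (simp add: ennreal_mult)
  qed simp
  then have "D_neg k f \<le> (\<integral>\<^sup>+ x. \<integral>\<^sup>+ v. ennreal c * ?w x v + ?d x v \<partial>lebesgue \<partial>lebesgue)"
    unfolding D_neg_def by (intro nn_integral_mono)
  also have "\<dots> = ennreal c * outer_mass f R + D_neg k (cutoff R f)"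
    using lebesgue_iterated_nn_integral_linear[of "\<lambda>p. ?w (fst p) (snd p)" "\<lambda>p. ?d (fst p) (snd p)"]
    unfolding outer_mass_def D_neg_def D_neg_density_cutoff
    by (simp add: nn_integral_indicator_cmult)
  finally show ?thesis
    by (simp add: add.commute)
qed

lemma D_neg_le_dilate:
  assumes f: "(\<lambda>p. f (fst p) (snd p)) \<in> borel_measurable lebesgue" "\<And>x v. 0 \<le> f x v" "\<And>x v. f x v \<le> 1"
    and k: "0 < k" and e: "exp_lambda f \<in> borel_measurable borel" and s: "0 < s" "s \<le> 1"
    and ratio: "\<And>r. 0 < r \<Longrightarrow> 2 * mass (dilate s f) r / r < 1"
  shows "D_neg k f \<le> ennreal (s ^ 3) * D_neg k (dilate s f)"
proof -
  define \<psi> where "\<psi> x = (\<integral>\<^sup>+ v. D_neg_density k f x v \<partial>lebesgue)" for x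
  have "\<psi> \<in> borel_measurable lebesgue"
    using lebesgue_nn_integral_fst(1)[OF borel_measurable_D_neg_density[OF f(1) e]]
    by (simp add: \<psi>_def[abs_def])
  then have "ennreal (1 / s ^ 3) * D_neg k f = (\<integral>\<^sup>+ x. \<psi> (s *\<^sub>R x) \<partial>lebesgue)"
    using nn_integral_lebesgue_scaleR[of \<psi> s] s by (simp add: D_neg_def \<psi>_def)
  also have "\<dots> \<le> D_neg k (dilate s f)"
    unfolding D_neg_def \<psi>_def
  proof (intro nn_integral_mono)
    fix x v :: "real^3"
    have "exp_lambda f (s * norm x) \<le> exp_lambda (dilate s f) (norm x)"
      using exp_lambda_le_dilate[OF f(1) s, of "norm x"] ratio[of "norm x"] by (cases "x = 0") auto
    moreover have "chi k (f (s *\<^sub>R x) v) - f (s *\<^sub>R x) v \<le> 0"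
      using chi_le_self[OF f(2,3) k] by simp
    ultimately have "- (exp_lambda f (s * norm x) * (chi k (f (s *\<^sub>R x) v) - f (s *\<^sub>R x) v)) \<le>
        - (exp_lambda (dilate s f) (norm x) * (chi k (f (s *\<^sub>R x) v) - f (s *\<^sub>R x) v))"
      by (simp add: mult_right_mono_neg)
    then show "D_neg_density k f (s *\<^sub>R x) v \<le> D_neg_density k (dilate s f) x v"
      using s unfolding D_neg_density_def dilate_def
      by (intro ennreal_leI max.mono) auto
  qed
  finally have "ennreal (1 / s ^ 3) * D_neg k f \<le> D_neg k (dilate s f)" .
  then have "ennreal (s ^ 3) * (ennreal (1 / s ^ 3) * D_neg k f) \<le> ennreal (s ^ 3) * D_neg k (dilate s f)"
    by (rule mult_left_mono) simp
  then show ?thesis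
    using s by (simp add: mult.assoc[symmetric] ennreal_mult[symmetric])
qed

lemma admissibleD:
  assumes "f \<in> admissible M \<sigma>0"
  shows "(\<lambda>p. f (fst p) (snd p)) \<in> borel_measurable lebesgue" "\<And>x v. 0 \<le> f x v" "sph_sym f"
    "total_mass f = ennreal M" "\<And>x. rho f x \<le> ennreal \<sigma>0"
  using assms by (auto simp: admissible_def)

context
  fixes k M \<beta> \<sigma>0 :: real
  assumes k: "0 < k" and M: "0 < M" and \<beta>: "0 < \<beta>" "\<beta> < 1/2"
    and \<sigma>0: "0 < \<sigma>0" "\<sigma>0 \<le> 3 * \<beta>^3 / (4 * pi * M\<^sup>2)"
begin

lemma admissible_mass_ratio_le:
  assumes "f \<in> admissible M \<sigma>0" "0 \<le> r"
  shows "2 * mass f r / r \<le> 2 * \<beta>"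
  using mass_div_radius_le[OF admissibleD(5,4)[OF assms(1)] M \<beta>(1) _ \<sigma>0(2) assms(2)] \<sigma>0(1)
  by simp

lemma admissible_exp_lambda_bounds:
  assumes f: "f \<in> admissible M \<sigma>0" and r: "0 \<le> r"
  shows "1 \<le> exp_lambda f r" "exp_lambda f r \<le> 1 / sqrt (1 - 2 * \<beta>)"
proof -
  have ratio: "2 * mass f r / r \<le> 2 * \<beta>"
    using admissible_mass_ratio_le[OF f r] .
  then show "1 \<le> exp_lambda f r"
    using one_le_exp_lambda[OF r] \<beta> by simp
  have "1 - 1 / (1 / sqrt (1 - 2 * \<beta>))\<^sup>2 = 2 * \<beta>"
    using \<beta> by (simp add: power_divide)
  then show "exp_lambda f r \<le> 1 / sqrt (1 - 2 * \<beta>)"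
    using exp_lambda_le[of "1 / sqrt (1 - 2 * \<beta>)" f r] ratio \<beta> by simp
qed

lemma Dfun_admissible_lower_bound:
  assumes f: "f \<in> admissible M \<sigma>0"
  shows "ereal (- (M / sqrt (1 - 2 * \<beta>))) \<le> Dfun k f"
proof -
  have "D_neg k f \<le> ennreal (1 / sqrt (1 - 2 * \<beta>)) * ennreal M"
    using D_neg_le_total_mass[OF admissibleD(1,2)[OF f] k] admissible_exp_lambda_bounds[OF f]
      admissibleD(4)[OF f] by force
  also have "\<dots> = ennreal (M / sqrt (1 - 2 * \<beta>))"
    by (subst ennreal_mult'[symmetric]) (use \<beta> in auto)
  finally have "enn2ereal (D_neg k f) \<le> ereal (M / sqrt (1 - 2 * \<beta>))"
    using M \<beta> by (simp add: less_eq_ennreal.rep_eq)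
  then show ?thesis
    using uminus_D_neg_le_Dfun[of k f] by (metis ereal_minus_le_minus order_trans uminus_ereal.simps(1))
qed

lemma Dfun_admissible_eq:
  assumes "f \<in> admissible M \<sigma>0" "\<And>x v. f x v \<le> 1"
  shows "Dfun k f = - enn2ereal (D_neg k f)"
  using Dfun_eq_uminus_D_neg[of f k] admissibleD(2)[OF assms(1)] assms(2) k
    admissible_exp_lambda_bounds(1)[OF assms(1)] by force

lemma D_neg_le_of_Dfun_ge:
  assumes f: "f \<in> admissible M \<sigma>0" "\<And>x v. f x v \<le> 1" and J: "ereal (- J) \<le> Dfun k f"
  shows "D_neg k f \<le> ennreal J"
proof -
  have "enn2ereal (D_neg k f) \<le> ereal J"
    using J Dfun_admissible_eq[OF f] by (metis ereal_minus_le_minus uminus_ereal.simps(1))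
  moreover have "0 \<le> J"
    using calculation enn2ereal_nonneg[of "D_neg k f"] by (metis ereal_less_eq(5) order_trans)
  ultimately show ?thesis
    by (simp add: less_eq_ennreal.rep_eq)
qed

lemma D_neg_cutoff_le:
  assumes f: "f \<in> admissible M \<sigma>0" "\<And>x v. f x v \<le> 1"
    and J: "\<And>g. g \<in> admissible M \<sigma>0 \<Longrightarrow> ereal (- J) \<le> Dfun k g"
    and M1: "total_mass (cutoff R f) = ennreal M1" "0 < M1" "M1 \<le> M"
  shows "D_neg k (cutoff R f) \<le> ennreal (J * (M1 / M))"
proof -
  let ?g = "cutoff R f"
  note fA = admissibleD[OF f(1)]
  define s where "s = root 3 (M1 / M)"
  have s: "0 < s" "s \<le> 1" "s ^ 3 = M1 / M"
    using M M1 by (auto simp: s_def intro: real_root_pow_pos2)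
  have g: "(\<lambda>p. ?g (fst p) (snd p)) \<in> borel_measurable lebesgue" "\<And>x v. 0 \<le> ?g x v" "\<And>x v. ?g x v \<le> 1"
    using measurable_cutoff[OF fA(1)] fA(2) f(2) by (auto simp: cutoff_def)
  have "rho ?g x \<le> ennreal \<sigma>0" for x
    using fA(5)[of x] order_trans[of "rho ?g x" "rho f x"] by (auto simp: rho_cutoff indicator_def)
  moreover have "total_mass ?g = ennreal (s ^ 3 * M)"
    using M1 s M by simp
  ultimately have gs: "dilate s ?g \<in> admissible M \<sigma>0"
    using dilate_admissible[OF g(1,2) sph_sym_cutoff[OF fA(3)]] s by blast
  have "D_neg k ?g \<le> ennreal (s ^ 3) * D_neg k (dilate s ?g)"
  proof (rule D_neg_le_dilate[OF g k _ s(1,2)])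
    show "exp_lambda ?g \<in> borel_measurable borel"
      using M1 by (intro borel_measurable_exp_lambda) simp
    show "2 * mass (dilate s ?g) r / r < 1" if "0 < r" for r
      using admissible_mass_ratio_le[OF gs, of r] that \<beta>(2) by linarith
  qed
  also have "\<dots> \<le> ennreal (s ^ 3) * ennreal J"
    using D_neg_le_of_Dfun_ge[OF gs _ J[OF gs]] g(3) by (intro mult_left_mono) (auto simp: dilate_def)
  also have "\<dots> = ennreal (J * (M1 / M))"
    by (subst ennreal_mult'[symmetric]) (use s M M1 in \<open>auto simp: mult.commute\<close>)
  finally show ?thesis .
qed

lemma D_neg_le_outer_mass_bound:
  assumes f: "f \<in> admissible M \<sigma>0" "\<And>x v. f x v \<le> 1"
    and J: "\<And>g. g \<in> admissible M \<sigma>0 \<Longrightarrow> ereal (- J) \<le> Dfun k g" "0 \<le> J"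
    and c: "1 < c" and R: "0 < R" "2 * M / (1 - 1 / c\<^sup>2) \<le> R"
    and outer: "outer_mass f R = ennreal \<Delta>" "0 \<le> \<Delta>" "\<Delta> < M"
  shows "D_neg k f \<le> ennreal (J * ((M - \<Delta>) / M) + c * \<Delta>)"
proof -
  note fA = admissibleD[OF f(1)]
  have "ennreal M = total_mass (cutoff R f) + ennreal \<Delta>"
    using total_mass_split_cutoff[OF fA(1), of R] fA(4) outer(1) by simp
  then have inner: "total_mass (cutoff R f) = ennreal (M - \<Delta>)"
    using outer(2) by (metis ennreal_add_diff_cancel_right ennreal_minus ennreal_neq_top)
  have outside: "0 \<le> exp_lambda f r \<and> exp_lambda f r \<le> c" if "R \<le> r" for r
  proof
    have "0 \<le> r"
      using R that by linarith
    from admissible_exp_lambda_bounds(1)[OF f(1) this] show "0 \<le> exp_lambda f r"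
      by simp
    have "2 * mass f r / r \<le> 2 * M / R"
      using mass_le_total_mass[OF fA(4)] mass_nonneg[of f r] M R that
      by (intro frac_le) auto
    also have "\<dots> \<le> 1 - 1 / c\<^sup>2"
      using R c by (simp add: divide_le_eq mult.commute)
    finally show "exp_lambda f r \<le> c"
      using exp_lambda_le c by simp
  qed
  have "D_neg k f \<le> D_neg k (cutoff R f) + ennreal c * outer_mass f R"
    using fA(4) by (intro D_neg_le_cutoff[OF fA(1,2) k _ outside] borel_measurable_exp_lambda) simp_all
  also have "\<dots> \<le> ennreal (J * ((M - \<Delta>) / M)) + ennreal (c * \<Delta>)"
    using D_neg_cutoff_le[OF f J(1) inner] outer c by (intro add_mono) (auto simp: ennreal_mult)
  also have "\<dots> = ennreal (J * ((M - \<Delta>) / M) + c * \<Delta>)"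
    using J(2) outer c M by (intro ennreal_plus[symmetric]) auto
  finally show ?thesis .
qed

lemma INF_Dfun_eq_ereal:
  assumes "h \<in> admissible M \<sigma>0" "Dfun k h < 0"
  obtains J where "(INF f\<in>admissible M \<sigma>0. Dfun k f) = ereal (- J)"
proof -
  have "(INF f\<in>admissible M \<sigma>0. Dfun k f) < 0"
    using INF_lower[OF assms(1), of "Dfun k"] assms(2) by simp
  moreover have "ereal (- (M / sqrt (1 - 2 * \<beta>))) \<le> (INF f\<in>admissible M \<sigma>0. Dfun k f)"
    by (rule INF_greatest) (rule Dfun_admissible_lower_bound)
  ultimately show ?thesis
    using that[of "- real_of_ereal (INF f\<in>admissible M \<sigma>0. Dfun k f)"]
    by (cases "INF f\<in>admissible M \<sigma>0. Dfun k f") auto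
qed

lemma minimizing_sequence_mass_escape_bound:
  assumes f: "\<And>n. f n \<in> admissible M \<sigma>0" "\<And>n x v. f n x v \<le> 1"
    and J: "\<And>g. g \<in> admissible M \<sigma>0 \<Longrightarrow> ereal (- J) \<le> Dfun k g" "0 \<le> J"
    and D_lim: "(\<lambda>n. Dfun k (f n)) \<longlonglongrightarrow> ereal (- J)"
    and c: "1 < c" and R: "\<And>n. 0 < R n" "\<And>n. 2 * M / (1 - 1 / c\<^sup>2) \<le> R n"
    and L: "0 < L" "L < M" "(\<lambda>n. outer_mass (f n) (R n)) \<longlonglongrightarrow> ennreal L"
  shows "J \<le> c * M"
proof -
  define \<Delta> where "\<Delta> n = enn2real (outer_mass (f n) (R n))" for n
  have outer: "outer_mass (f n) (R n) = ennreal (\<Delta> n)" for n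
    using outer_mass_le_total_mass[of "f n" "R n"] admissibleD(4)[OF f(1)]
    unfolding \<Delta>_def by (metis ennreal_enn2real ennreal_less_top order_le_less_trans top.not_eq_extremum)
  have \<Delta>_lim: "\<Delta> \<longlonglongrightarrow> L"
    unfolding \<Delta>_def using tendsto_enn2real[OF L(3)] L(1) by simp
  have "eventually (\<lambda>n. \<Delta> n < M) sequentially"
    using order_tendstoD(2)[OF \<Delta>_lim L(2)] .
  then have bound: "eventually (\<lambda>n. - Dfun k (f n) \<le> ereal (J * ((M - \<Delta> n) / M) + c * \<Delta> n)) sequentially"
  proof eventually_elim
    case (elim n)
    have "D_neg k (f n) \<le> ennreal (J * ((M - \<Delta> n) / M) + c * \<Delta> n)"
      using D_neg_le_outer_mass_bound[OF f(1)[of n] f(2)[of n] J c R outer] elim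
      by (simp add: \<Delta>_def)
    moreover have "0 \<le> J * ((M - \<Delta> n) / M) + c * \<Delta> n"
      using J(2) elim c M by (simp add: \<Delta>_def)
    ultimately show ?case
      using Dfun_admissible_eq[OF f(1)[of n] f(2)[of n]] by (simp add: less_eq_ennreal.rep_eq)
  qed
  have lim_D: "(\<lambda>n. - Dfun k (f n)) \<longlonglongrightarrow> ereal J"
    using tendsto_uminus_ereal[OF D_lim] by simp
  have lim_bound: "(\<lambda>n. ereal (J * ((M - \<Delta> n) / M) + c * \<Delta> n)) \<longlonglongrightarrow> ereal (J * ((M - L) / M) + c * L)"
    by (intro tendsto_intros \<Delta>_lim) (use M in simp)
  have "J \<le> J * ((M - L) / M) + c * L"
    using tendsto_le[OF trivial_limit_sequentially lim_bound lim_D bound] by simp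
  then have "J * L \<le> c * M * L"
    using M by (simp add: field_simps)
  then show ?thesis
    using L(1) by simp
qed

end

theorem corollary5p5:
  fixes k M \<beta> \<sigma>0 \<delta> :: real
    and I :: ereal
    and h :: "real^3 \<Rightarrow> real^3 \<Rightarrow> real"
    and R :: "nat \<Rightarrow> real"
  assumes "0 < k" "k \<le> 2" "0 < M" "0 < \<beta>" "\<beta> < 1/2"
    and "0 < \<sigma>0" "\<sigma>0 \<le> min 1 (3 * \<beta>^3 / (4 * pi * M\<^sup>2))"
    and "I = (INF f\<in>admissible M \<sigma>0. Dfun k f)"
    and "h \<in> admissible M \<sigma>0" "Dfun k h < 0"
    and "0 < \<delta>" "\<bar>Dfun k h\<bar> \<ge> ereal (M + \<delta>)"
    and "\<And>n. R n \<ge> max (8 * M / 3) (2 * M / (1 - 1 / (1 + \<delta> / (6 * M))\<^sup>2))"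
  shows "\<not> (\<exists>f :: nat \<Rightarrow> real^3 \<Rightarrow> real^3 \<Rightarrow> real.
              (\<forall>n. f n \<in> admissible M \<sigma>0)
            \<and> (\<lambda>n. Dfun k (f n)) \<longlonglongrightarrow> I
            \<and> (\<forall>n x v. f n x v \<le> 1)
            \<and> (\<exists>L. 0 < L \<and> L < M \<and> (\<lambda>n. outer_mass (f n) (R n)) \<longlonglongrightarrow> ennreal L))"
proof (rule notI, elim exE conjE)
  fix f :: "nat \<Rightarrow> real^3 \<Rightarrow> real^3 \<Rightarrow> real" and L
  assume f: "\<forall>n. f n \<in> admissible M \<sigma>0" "\<forall>n x v. f n x v \<le> 1"
    and D_lim: "(\<lambda>n. Dfun k (f n)) \<longlonglongrightarrow> I"
    and L: "0 < L" "L < M" "(\<lambda>n. outer_mass (f n) (R n)) \<longlonglongrightarrow> ennreal L"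
  have "\<sigma>0 \<le> 3 * \<beta>^3 / (4 * pi * M\<^sup>2)"
    using assms(7) by simp
  note ctx = assms(1,3,4,5,6) this
  obtain J where J: "I = ereal (- J)"
    using INF_Dfun_eq_ereal[OF ctx assms(9,10)] assms(8) by blast
  have J_inf: "ereal (- J) \<le> Dfun k g" if "g \<in> admissible M \<sigma>0" for g
    using INF_lower[OF that, of "Dfun k"] assms(8) J by simp
  have "M + \<delta> \<le> J"
    using J_inf[OF assms(9)] assms(10,12) by (cases "Dfun k h") auto
  define c where "c = 1 + \<delta> / (6 * M)"
  have c: "1 < c" "c * M = M + \<delta> / 6"
    using assms(3,11) by (auto simp: c_def field_simps)
  have R: "0 < R n" "2 * M / (1 - 1 / c\<^sup>2) \<le> R n" for n
    using assms(3) assms(13)[of n] by (auto simp: c_def)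
  have "J \<le> c * M"
    using minimizing_sequence_mass_escape_bound[OF ctx f[rule_format] J_inf _ D_lim[unfolded J] c(1) R L]
      \<open>M + \<delta> \<le> J\<close> assms(3,11) by simp
  then show False
    using \<open>M + \<delta> \<le> J\<close> c(2) assms(11) by simp
qed

end
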